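(* Let $m\ge 3$ items be placed independently, each uniformly at random into one of three boxes, and let $a,b,c$ be the random numbers of items in the three boxes. Then $\mathbb{E}[\min\{a,b,c\}]\ge \frac{2}{27}m$. *)

theory Defs
  imports "HOL-Probability.Probability"
begin

text \<open>An outcome of placing items 0..m-1 independently and uniformly into boxes 0,1,2
  is a function from items to boxes (extensional outside the items); the uniform
  distribution on all such functions is the product of independent uniform choices.\<close>

definition placements :: "nat \<Rightarrow> (nat \<Rightarrow> nat) set" where
  "placements m = PiE {..<m} (\<lambda>_. {0, 1, 2})"

definition box_count :: "nat \<Rightarrow> (nat \<Rightarrow> nat) \<Rightarrow> nat \<Rightarrow> nat" where
  "box_count m f j = card {i \<in> {..<m}. f i = j}"

end

theory Submission
  imports Defs
begin

text \<open>Let T(I) be the sum, over all 3^|I| placements of the items I, of the smallest box count.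
  Box counts add up when two disjoint groups of items are placed independently, so the minimum is
  superadditive and T(I \<union> J) \<ge> 3^|J| T(I) + 3^|I| T(J). Every placement that hits all three boxes
  contributes at least 1, and by inclusion-exclusion there are 3^n - 3 2^n + 3 of them; this gives
  T(I) \<ge> 2/27 n 3^n for n = 3, 4, 5, and splitting off three items at a time extends
  the bound to all n \<ge> 3.\<close>

definition placements_on :: "nat set \<Rightarrow> (nat \<Rightarrow> nat) set" where
  "placements_on I = PiE I (\<lambda>_. {0, 1, 2})"

definition box_count_on :: "nat set \<Rightarrow> (nat \<Rightarrow> nat) \<Rightarrow> nat \<Rightarrow> nat" where
  "box_count_on I f j = card {i \<in> I. f i = j}"

definition min_box_count :: "nat set \<Rightarrow> (nat \<Rightarrow> nat) \<Rightarrow> nat" where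
  "min_box_count I f = min (box_count_on I f 0) (min (box_count_on I f 1) (box_count_on I f 2))"

definition total_min_box_count :: "nat set \<Rightarrow> real" where
  "total_min_box_count I = (\<Sum>f\<in>placements_on I. real (min_box_count I f))"

lemma finite_placements_on: "finite I \<Longrightarrow> finite (placements_on I)"
  unfolding placements_on_def by (simp add: finite_PiE)

lemma card_placements_on: "finite I \<Longrightarrow> card (placements_on I) = 3 ^ card I"
  unfolding placements_on_def by (simp add: card_PiE numeral_3_eq_3)

lemma bij_betw_merge_PiE:
  assumes "I \<inter> J = {}"
  shows "bij_betw (merge I J) (PiE I A \<times> PiE J A) (PiE (I \<union> J) A)"
proof (rule bij_betwI[where g = "\<lambda>f. (restrict f I, restrict f J)"])
  show "merge I J \<in> PiE I A \<times> PiE J A \<rightarrow> PiE (I \<union> J) A"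
    using assms by (auto simp: PiE_def)
  show "(\<lambda>f. (restrict f I, restrict f J)) \<in> PiE (I \<union> J) A \<rightarrow> PiE I A \<times> PiE J A"
    by auto
  show "(restrict (merge I J x) I, restrict (merge I J x) J) = x" if "x \<in> PiE I A \<times> PiE J A" for x
    using that assms by (auto simp: extensional_restrict)
  show "merge I J (restrict f I, restrict f J) = f" if "f \<in> PiE (I \<union> J) A" for f
    using that by (auto simp: merge_def fun_eq_iff PiE_def extensional_def)
qed

lemma box_count_on_merge:
  assumes "finite I" "finite J" "I \<inter> J = {}"
  shows "box_count_on (I \<union> J) (merge I J (g, h)) j = box_count_on I g j + box_count_on J h j"
proof -
  have "{i \<in> I \<union> J. merge I J (g, h) i = j} = {i \<in> I. g i = j} \<union> {i \<in> J. h i = j}"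
    using assms(3) by (auto simp: merge_def)
  moreover have "card ({i \<in> I. g i = j} \<union> {i \<in> J. h i = j})
      = card {i \<in> I. g i = j} + card {i \<in> J. h i = j}"
    using assms by (intro card_Un_disjoint) auto
  ultimately show ?thesis
    unfolding box_count_on_def by simp
qed

lemma min_box_count_merge_ge:
  assumes "finite I" "finite J" "I \<inter> J = {}"
  shows "min_box_count I g + min_box_count J h \<le> min_box_count (I \<union> J) (merge I J (g, h))"
  unfolding min_box_count_def box_count_on_merge[OF assms] by linarith

lemma total_min_box_count_superadditive:
  assumes "finite I" "finite J" "I \<inter> J = {}"
  shows "total_min_box_count I * 3 ^ card J + total_min_box_count J * 3 ^ card I
           \<le> total_min_box_count (I \<union> J)"
proof -
  have "total_min_box_count I * 3 ^ card J + total_min_box_count J * 3 ^ card I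
      = (\<Sum>g\<in>placements_on I. \<Sum>h\<in>placements_on J. real (min_box_count I g) + real (min_box_count J h))"
    by (simp add: sum.distrib total_min_box_count_def card_placements_on assms
                  sum_distrib_left sum_distrib_right mult.commute)
  also have "\<dots> = (\<Sum>(g, h)\<in>placements_on I \<times> placements_on J.
                      real (min_box_count I g + min_box_count J h))"
    by (simp add: sum.cartesian_product)
  also have "\<dots> \<le> (\<Sum>(g, h)\<in>placements_on I \<times> placements_on J.
                      real (min_box_count (I \<union> J) (merge I J (g, h))))"
    using min_box_count_merge_ge[OF assms]
    by (intro sum_mono) (auto simp del: of_nat_add)
  also have "\<dots> = total_min_box_count (I \<union> J)"
    unfolding total_min_box_count_def placements_on_def
    using sum.reindex_bij_betw[OF bij_betw_merge_PiE[OF assms(3)],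
            of "\<lambda>f. real (min_box_count (I \<union> J) f)"]
    by (simp add: case_prod_beta')
  finally show ?thesis .
qed

definition placements_avoiding :: "nat set \<Rightarrow> nat \<Rightarrow> (nat \<Rightarrow> nat) set" where
  "placements_avoiding I j = PiE I (\<lambda>_. {0, 1, 2} - {j})"

lemma card_placements_missing_a_box:
  assumes "finite I" "I \<noteq> {}"
  defines "A \<equiv> placements_avoiding I"
  shows "card (A 0 \<union> A 1 \<union> A 2) = 3 * 2 ^ card I - 3"
proof -
  have fin: "finite (A j)" for j
    unfolding A_def placements_avoiding_def using assms(1) by (simp add: finite_PiE)
  have card_single: "card (A j) = 2 ^ card I" if "j \<in> {0, 1, 2}" for j
  proof -
    have "card ({0, 1, 2} - {j}) = 2" using that by auto
    then show ?thesis unfolding A_def placements_avoiding_def using assms(1) by (simp add: card_PiE)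
  qed
  have card_pair: "card (A j \<inter> A k) = 1" if "j \<in> {0, 1, 2}" "k \<in> {0, 1, 2}" "j \<noteq> k" for j k
  proof -
    have "card (({0, 1, 2} - {j}) \<inter> ({0, 1, 2} - {k})) = 1"
      using that by (auto simp: numeral_2_eq_2 insert_Diff_if)
    then show ?thesis unfolding A_def placements_avoiding_def PiE_Int using assms(1) by (simp add: card_PiE)
  qed
  have "A 0 \<inter> A 1 \<inter> A 2 = PiE I (\<lambda>_. {})"
    unfolding A_def placements_avoiding_def PiE_Int by (rule PiE_cong) auto
  then have triple: "A 0 \<inter> A 1 \<inter> A 2 = {}"
    using assms(2) by (auto simp: PiE_eq_empty_iff)
  have "card ((A 0 \<union> A 1) \<inter> A 2) = card (A 0 \<inter> A 2 \<union> A 1 \<inter> A 2)"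
    by (simp add: Int_Un_distrib2)
  also have "\<dots> = 2"
    using triple fin card_pair[of 0 2] card_pair[of 1 2] by (subst card_Un_disjoint) auto
  finally have "card ((A 0 \<union> A 1) \<inter> A 2) = 2" .
  moreover have "card (A 0 \<union> A 1) = 2 * 2 ^ card I - 1"
    using card_Un_Int[OF fin fin, of 0 1] card_single[of 0] card_single[of 1] card_pair[of 0 1]
    by simp
  ultimately show ?thesis
    using card_Un_Int[of "A 0 \<union> A 1" "A 2"] fin card_single[of 2] by simp
qed

lemma one_le_min_box_count:
  assumes "finite I" "f \<in> placements_on I"
    and "f \<notin> placements_avoiding I 0 \<union> placements_avoiding I 1 \<union> placements_avoiding I 2"
  shows "1 \<le> min_box_count I f"
proof -
  have "1 \<le> box_count_on I f j" if "j \<in> {0, 1, 2}" for j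
  proof -
    have "f \<notin> placements_avoiding I j"
      using assms(3) that by auto
    then obtain i where "i \<in> I" "f i = j"
      using assms(2) by (fastforce simp: placements_on_def placements_avoiding_def PiE_def Pi_def)
    then show ?thesis
      unfolding box_count_on_def using assms(1) by (auto simp: Suc_le_eq card_gt_0_iff)
  qed
  then show ?thesis unfolding min_box_count_def by simp
qed

lemma total_min_box_count_ge_surjective:
  assumes "finite I" "I \<noteq> {}"
  shows "3 ^ card I - 3 * 2 ^ card I + 3 \<le> total_min_box_count I"
proof -
  define M where "M = placements_avoiding I 0 \<union> placements_avoiding I 1 \<union> placements_avoiding I 2"
  define S where "S = placements_on I - M"
  have sub: "M \<subseteq> placements_on I"
    unfolding M_def placements_avoiding_def placements_on_def by (auto simp: PiE_def Pi_def)
  have card_M: "card M = 3 * 2 ^ card I - 3"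
    unfolding M_def by (rule card_placements_missing_a_box[OF assms])
  have "card M \<le> 3 ^ card I"
    using card_mono[OF finite_placements_on[OF assms(1)] sub] card_placements_on[OF assms(1)] by simp
  moreover have "card S = 3 ^ card I - card M"
    unfolding S_def using sub card_placements_on[OF assms(1)]
    by (simp add: card_Diff_subset finite_subset finite_placements_on assms(1))
  ultimately have "3 ^ card I - 3 * 2 ^ card I + 3 = real (card S)"
    using card_M by (simp add: of_nat_diff)
  also have "\<dots> \<le> (\<Sum>f\<in>S. real (min_box_count I f))"
    using one_le_min_box_count[OF assms(1)] sum_mono[of S "\<lambda>_. 1::real"]
    by (force simp: S_def M_def)
  also have "\<dots> \<le> total_min_box_count I"
    unfolding total_min_box_count_def S_def
    by (rule sum_mono2) (auto simp: finite_placements_on assms(1))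
  finally show ?thesis .
qed

lemma total_min_box_count_lower_bound:
  assumes "finite I" "3 \<le> card I"
  shows "2 / 27 * card I * 3 ^ card I \<le> total_min_box_count I"
  using assms
proof (induction "card I" arbitrary: I rule: less_induct)
  case less
  show ?case
  proof (cases "card I \<le> 5")
    case True
    have "I \<noteq> {}" using less.prems(2) by auto
    moreover have "card I \<in> {3, 4, 5}" using True less.prems(2) by auto
    ultimately show ?thesis
      using total_min_box_count_ge_surjective[OF less.prems(1)] by auto
  next
    case False
    then obtain J where J: "J \<subseteq> I" "card J = 3"
      using obtain_subset_with_card_n[of 3 I] by auto
    define K where "K = I - J"
    have fin: "finite J" "finite K"
      using J(1) less.prems(1) finite_subset unfolding K_def by auto
    have I: "I = K \<union> J" "K \<inter> J = {}"
      using J(1) unfolding K_def by auto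
    have card_I: "card I = card K + 3"
      using card_Un_disjoint[OF fin(2,1) I(2)] I(1) J(2) by simp
    have "2 / 27 * card K * 3 ^ card K \<le> total_min_box_count K"
      using less.hyps[of K] card_I fin False by simp
    moreover have "6 \<le> total_min_box_count J"
      using total_min_box_count_ge_surjective[OF fin(1)] J(2) by fastforce
    ultimately have "2 / 27 * card K * 3 ^ card K * 27 + 6 * 3 ^ card K
        \<le> total_min_box_count K * 3 ^ card J + total_min_box_count J * 3 ^ card K"
      using J(2) by (intro add_mono mult_right_mono) auto
    also have "\<dots> \<le> total_min_box_count I"
      using total_min_box_count_superadditive[OF fin(2,1) I(2)] I(1) by simp
    finally show ?thesis
      unfolding card_I by (simp add: power_add algebra_simps)
  qed
qed

lemma expectation_min_box_count:
  "measure_pmf.expectation (pmf_of_set (placements m))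
     (\<lambda>f. real (min (box_count m f 0) (min (box_count m f 1) (box_count m f 2))))
   = total_min_box_count {..<m} / 3 ^ m"
proof -
  have "placements m = placements_on {..<m}"
    unfolding placements_def placements_on_def ..
  moreover have "placements_on {..<m} \<noteq> {}"
    unfolding placements_on_def by (simp add: PiE_eq_empty_iff)
  ultimately show ?thesis
    by (simp add: integral_pmf_of_set finite_placements_on card_placements_on
        total_min_box_count_def min_box_count_def box_count_on_def box_count_def)
qed

theorem lemma3:
  fixes m :: nat
  assumes "m \<ge> 3"
  shows "measure_pmf.expectation (pmf_of_set (placements m))
           (\<lambda>f. real (min (box_count m f 0) (min (box_count m f 1) (box_count m f 2))))
         \<ge> 2 / 27 * real m"
proof -
  have "2 / 27 * real m * 3 ^ m \<le> total_min_box_count {..<m}"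
    using total_min_box_count_lower_bound[of "{..<m}"] assms by simp
  then show ?thesis
    unfolding expectation_min_box_count by (simp add: field_simps)
qed

end
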